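(* Let $G_1,\ldots,G_p$ be positive (entrywise) real $m\times n$ matrices, let $R_1,\ldots,R_p$ be positive real $m$-vectors and $C_1,\ldots,C_p$ positive real $n$-vectors such that $|R_1|=\cdots=|R_p|=|C_1|=\cdots=|C_p|$. Let $\alpha_1,\ldots,\alpha_p\ge0$ with $\sum_k\alpha_k=1$, and set $G=\sum_k\alpha_kG_k$, $R=\sum_k\alpha_kR_k$, $C=\sum_k\alpha_kC_k$. Then $$f(G;R,C)\ \ge\ \prod_{k=1}^p f^{\alpha_k}(G_k;R_k,C_k).$$
   Context: For a vector $B=(b_1,\ldots,b_l)$, $|B|=\sum_i b_i$. For a positive $m\times n$ matrix $G=(g_{ij})$ and vectors $x=(\xi_1,\ldots,\xi_m)$, $y=(\eta_1,\ldots,\eta_n)$, let $F(G;x,y)=\sum_{i=1}^m\sum_{j=1}^n g_{ij}\xi_i\eta_j$. For positive vectors $R=(r_1,\ldots,r_m)$, $C=(c_1,\ldots,c_n)$, let $f(G;R,C)$ be the minimum of $F(G;x,y)$ over all $x\in\mathbb{R}_{>0}^m$, $y\in\mathbb{R}_{>0}^n$ with $\prod_{i=1}^m\xi_i^{r_i}=\prod_{j=1}^n\eta_j^{c_j}=1$ (this minimum is attained). *)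

theory Defs
  imports "HOL-Analysis.Analysis"
begin

text \<open>Matrices are functions nat => nat => real (entries g i j with i < m, j < n),
  vectors are functions nat => real (entries with index below the length).\<close>

definition vabs :: "nat \<Rightarrow> (nat \<Rightarrow> real) \<Rightarrow> real" where
  "vabs l B = (\<Sum>i<l. B i)"

definition Fform :: "nat \<Rightarrow> nat \<Rightarrow> (nat \<Rightarrow> nat \<Rightarrow> real) \<Rightarrow> (nat \<Rightarrow> real) \<Rightarrow> (nat \<Rightarrow> real) \<Rightarrow> real" where
  "Fform m n G x y = (\<Sum>i<m. \<Sum>j<n. G i j * x i * y j)"

text \<open>f(G;R,C): the minimum (= infimum, since it is attained) of F(G;x,y) over positive
  x, y with prod xi_i^{r_i} = prod eta_j^{c_j} = 1.\<close>
definition fmin :: "nat \<Rightarrow> nat \<Rightarrow> (nat \<Rightarrow> nat \<Rightarrow> real) \<Rightarrow> (nat \<Rightarrow> real) \<Rightarrow> (nat \<Rightarrow> real) \<Rightarrow> real" where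
  "fmin m n G R C = Inf {Fform m n G x y | x y.
      (\<forall>i<m. x i > 0) \<and> (\<forall>j<n. y j > 0) \<and>
      (\<Prod>i<m. x i powr R i) = 1 \<and> (\<Prod>j<n. y j powr C j) = 1}"

end

theory Submission
  imports Defs
begin

text \<open>
  F(G;x,y) is homogeneous of degree one in x and in y. Rescaling an arbitrary positive pair
  onto the constraint surface therefore gives, for all positive x and y,
  F(G;x,y) >= f(G;R,C) * exp (sum_i r_i ln xi_i / |R| + sum_j c_j ln eta_j / |C|).
  If x, y are admissible for the averaged data R, C, then by weighted AM-GM
  F(G;x,y) = sum_k alpha_k F(G_k;x,y) >= prod_k F(G_k;x,y)^alpha_k, and bounding each factor
  from below as above leaves the correction prod_k exp (...)^alpha_k. Its exponent is linear
  in the weights, and since all |R_k| and all |C_k| agree it equals the exponent for the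
  averaged R, C, which vanishes by admissibility.
\<close>

definition admissible :: "nat \<Rightarrow> (nat \<Rightarrow> real) \<Rightarrow> (nat \<Rightarrow> real) \<Rightarrow> bool" where
  "admissible l R x \<longleftrightarrow> (\<forall>i<l. 0 < x i) \<and> (\<Prod>i<l. x i powr R i) = 1"

definition log_monomial :: "nat \<Rightarrow> (nat \<Rightarrow> real) \<Rightarrow> (nat \<Rightarrow> real) \<Rightarrow> real" where
  "log_monomial l R x = (\<Sum>i<l. R i * ln (x i))"

lemma prod_powr_eq_exp_log_monomial:
  assumes "\<forall>i<l. 0 < x i"
  shows "(\<Prod>i<l. x i powr R i) = exp (log_monomial l R x)"
  unfolding log_monomial_def exp_sum[OF finite_lessThan]
  using assms by (intro prod.cong) (auto simp: powr_def mult.commute)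

lemma admissible_iff_log_monomial:
  "admissible l R x \<longleftrightarrow> (\<forall>i<l. 0 < x i) \<and> log_monomial l R x = 0"
  by (auto simp: admissible_def prod_powr_eq_exp_log_monomial)

lemma log_monomial_scale:
  assumes "\<forall>i<l. 0 < x i" and "0 < c"
  shows "log_monomial l R (\<lambda>i. c * x i) = vabs l R * ln c + log_monomial l R x"
proof -
  have "log_monomial l R (\<lambda>i. c * x i) = (\<Sum>i<l. R i * ln c + R i * ln (x i))"
    unfolding log_monomial_def using assms by (intro sum.cong) (auto simp: ln_mult distrib_left)
  then show ?thesis
    by (simp add: sum.distrib log_monomial_def vabs_def sum_distrib_right)
qed

lemma log_monomial_weighted_sum:
  "log_monomial l (\<lambda>i. \<Sum>k\<in>K. \<alpha> k * Rs k i) x = (\<Sum>k\<in>K. \<alpha> k * log_monomial l (Rs k) x)"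
  unfolding log_monomial_def
  by (simp add: sum_distrib_left sum_distrib_right mult.assoc sum.swap[of _ K])

lemma Fform_nonneg:
  assumes "\<forall>i<m. \<forall>j<n. 0 \<le> G i j" and "\<forall>i<m. 0 \<le> x i" and "\<forall>j<n. 0 \<le> y j"
  shows "0 \<le> Fform m n G x y"
  unfolding Fform_def using assms by (intro sum_nonneg) auto

lemma Fform_scale:
  "Fform m n G (\<lambda>i. a * x i) (\<lambda>j. b * y j) = a * b * Fform m n G x y"
  by (simp add: Fform_def sum_distrib_left algebra_simps)

lemma Fform_weighted_sum:
  "Fform m n (\<lambda>i j. \<Sum>k\<in>K. \<alpha> k * Gs k i j) x y = (\<Sum>k\<in>K. \<alpha> k * Fform m n (Gs k) x y)"
proof -
  have "Fform m n (\<lambda>i j. \<Sum>k\<in>K. \<alpha> k * Gs k i j) x y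
      = (\<Sum>i<m. \<Sum>j<n. \<Sum>k\<in>K. \<alpha> k * (Gs k i j * x i * y j))"
    by (simp add: Fform_def sum_distrib_right mult.assoc)
  also have "\<dots> = (\<Sum>i<m. \<Sum>k\<in>K. \<Sum>j<n. \<alpha> k * (Gs k i j * x i * y j))"
    by (rule sum.cong[OF refl], rule sum.swap)
  also have "\<dots> = (\<Sum>k\<in>K. \<Sum>i<m. \<Sum>j<n. \<alpha> k * (Gs k i j * x i * y j))"
    by (rule sum.swap)
  also have "\<dots> = (\<Sum>k\<in>K. \<alpha> k * Fform m n (Gs k) x y)"
    by (simp add: Fform_def sum_distrib_left)
  finally show ?thesis .
qed

lemma fmin_eq_Inf_admissible:
  "fmin m n G R C = Inf {Fform m n G x y | x y. admissible m R x \<and> admissible n C y}"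
  unfolding fmin_def admissible_def by (intro arg_cong[where f = Inf]) blast

lemma fmin_le_Fform:
  assumes "\<forall>i<m. \<forall>j<n. 0 \<le> G i j" and "admissible m R x" and "admissible n C y"
  shows "fmin m n G R C \<le> Fform m n G x y"
  unfolding fmin_eq_Inf_admissible
proof (rule cInf_lower)
  show "bdd_below {Fform m n G x y | x y. admissible m R x \<and> admissible n C y}"
    using assms(1) by (intro bdd_belowI[of _ 0]) (auto simp: admissible_def intro!: Fform_nonneg)
qed (use assms in blast)

lemma fmin_greatest:
  assumes "\<And>x y. admissible m R x \<Longrightarrow> admissible n C y \<Longrightarrow> c \<le> Fform m n G x y"
  shows "c \<le> fmin m n G R C"
  unfolding fmin_eq_Inf_admissible
proof (rule cInf_greatest)
  have "admissible m R (\<lambda>_. 1)" "admissible n C (\<lambda>_. 1)"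
    by (simp_all add: admissible_def)
  then show "{Fform m n G x y | x y. admissible m R x \<and> admissible n C y} \<noteq> {}"
    by blast
qed (use assms in blast)

lemma fmin_nonneg:
  assumes "\<forall>i<m. \<forall>j<n. 0 \<le> G i j"
  shows "0 \<le> fmin m n G R C"
  using assms by (intro fmin_greatest) (auto simp: admissible_def intro!: Fform_nonneg)

lemma fmin_exp_le_Fform:
  assumes G: "\<forall>i<m. \<forall>j<n. 0 \<le> G i j"
    and R: "vabs m R \<noteq> 0" and C: "vabs n C \<noteq> 0"
    and x: "\<forall>i<m. 0 < x i" and y: "\<forall>j<n. 0 < y j"
  shows "fmin m n G R C * exp (log_monomial m R x / vabs m R + log_monomial n C y / vabs n C)
           \<le> Fform m n G x y"
proof -
  define u where "u = log_monomial m R x / vabs m R"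
  define v where "v = log_monomial n C y / vabs n C"
  define x' where "x' = (\<lambda>i. exp (- u) * x i)"
  define y' where "y' = (\<lambda>j. exp (- v) * y j)"
  have "admissible m R x'"
    using x R by (simp add: admissible_iff_log_monomial x'_def log_monomial_scale u_def)
  moreover have "admissible n C y'"
    using y C by (simp add: admissible_iff_log_monomial y'_def log_monomial_scale v_def)
  ultimately have "fmin m n G R C \<le> Fform m n G x' y'"
    by (rule fmin_le_Fform[OF G])
  moreover have "Fform m n G x y = exp (u + v) * Fform m n G x' y'"
    using Fform_scale[of m n G "exp u" x' "exp v" y']
    by (simp add: x'_def y'_def exp_add mult.assoc[symmetric] exp_minus_inverse)
  ultimately show ?thesis
    unfolding u_def v_def by (simp add: mult.commute)
qed

lemma weighted_geom_mean_le_arith_mean: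
  fixes F \<alpha> :: "'a \<Rightarrow> real"
  assumes "finite K" and "\<forall>k\<in>K. 0 \<le> \<alpha> k" and "sum \<alpha> K = 1" and "\<forall>k\<in>K. 0 \<le> F k"
  shows "(\<Prod>k\<in>K. F k powr \<alpha> k) \<le> (\<Sum>k\<in>K. \<alpha> k * F k)"
proof (cases "\<exists>k\<in>K. F k = 0")
  case True
  \<comment> \<open>\<open>0 powr a = 0\<close> even for \<open>a = 0\<close>, so a zero factor kills the product\<close>
  then have "(\<Prod>k\<in>K. F k powr \<alpha> k) = 0"
    using assms(1) by (auto intro: prod_zero)
  moreover have "0 \<le> (\<Sum>k\<in>K. \<alpha> k * F k)"
    using assms by (intro sum_nonneg) auto
  ultimately show ?thesis
    by simp
next
  case False
  with assms(4) have F: "\<forall>k\<in>K. 0 < F k"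
    by force
  obtain k0 where k0: "k0 \<in> K" "0 < \<alpha> k0"
    using assms(2,3) by (metis less_eq_real_def sum.neutral zero_neq_one)
  then have "K \<noteq> {}"
    by blast
  have sum_pos: "0 < (\<Sum>k\<in>K. \<alpha> k * F k)"
    using k0 F assms(2) by (intro sum_pos2[OF assms(1) k0(1)]) auto
  have "(\<Sum>k\<in>K. \<alpha> k * ln (F k)) \<le> ln (\<Sum>k\<in>K. \<alpha> k * F k)"
    using concave_on_sum[OF assms(1) \<open>K \<noteq> {}\<close> ln_concave, of \<alpha> F] assms F by auto
  then have "exp (\<Sum>k\<in>K. \<alpha> k * ln (F k)) \<le> (\<Sum>k\<in>K. \<alpha> k * F k)"
    using sum_pos by (simp add: ln_ge_iff)
  moreover have "(\<Prod>k\<in>K. F k powr \<alpha> k) = exp (\<Sum>k\<in>K. \<alpha> k * ln (F k))"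
    unfolding exp_sum[OF assms(1)] using F by (intro prod.cong) (auto simp: powr_def)
  ultimately show ?thesis
    by simp
qed

lemma prod_fmin_powr_le_fmin_weighted_sum:
  fixes K :: "'k set"
  assumes K: "finite K" and \<alpha>: "\<forall>k\<in>K. 0 \<le> \<alpha> k" "sum \<alpha> K = 1"
    and G: "\<forall>k\<in>K. \<forall>i<m. \<forall>j<n. 0 \<le> Gs k i j"
    and R: "\<forall>k\<in>K. vabs m (Rs k) = a" and C: "\<forall>k\<in>K. vabs n (Cs k) = b"
    and "a \<noteq> 0" and "b \<noteq> 0"
  shows "(\<Prod>k\<in>K. fmin m n (Gs k) (Rs k) (Cs k) powr \<alpha> k)
           \<le> fmin m n (\<lambda>i j. \<Sum>k\<in>K. \<alpha> k * Gs k i j) (\<lambda>i. \<Sum>k\<in>K. \<alpha> k * Rs k i)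
                (\<lambda>j. \<Sum>k\<in>K. \<alpha> k * Cs k j)"
proof (rule fmin_greatest)
  fix x y
  assume x: "admissible m (\<lambda>i. \<Sum>k\<in>K. \<alpha> k * Rs k i) x"
    and y: "admissible n (\<lambda>j. \<Sum>k\<in>K. \<alpha> k * Cs k j) y"
  define f where "f k = fmin m n (Gs k) (Rs k) (Cs k)" for k
  define F where "F k = Fform m n (Gs k) x y" for k
  define s where "s k = exp (log_monomial m (Rs k) x / a + log_monomial n (Cs k) y / b)" for k
  have f_nonneg: "0 \<le> f k" if "k \<in> K" for k
    using that G by (simp add: f_def fmin_nonneg)
  have F_nonneg: "0 \<le> F k" if "k \<in> K" for k
    using that G x y by (simp add: F_def admissible_def Fform_nonneg less_imp_le)
  have fs_le_F: "f k * s k \<le> F k" if "k \<in> K" for k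
  proof -
    have "vabs m (Rs k) = a" "vabs n (Cs k) = b"
      using that R C by auto
    then show ?thesis
      using fmin_exp_le_Fform[of m n "Gs k" "Rs k" "Cs k" x y] that G x y \<open>a \<noteq> 0\<close> \<open>b \<noteq> 0\<close>
      by (simp add: f_def F_def s_def admissible_def)
  qed
  have "(\<Prod>k\<in>K. s k powr \<alpha> k)
      = exp ((\<Sum>k\<in>K. \<alpha> k * log_monomial m (Rs k) x) / a + (\<Sum>k\<in>K. \<alpha> k * log_monomial n (Cs k) y) / b)"
    by (simp add: s_def exp_powr_real exp_sum[OF K, symmetric] sum_divide_distrib sum.distrib
        algebra_simps)
  also have "\<dots> = 1"
    using x y by (simp add: admissible_iff_log_monomial flip: log_monomial_weighted_sum)
  finally have s_factor: "(\<Prod>k\<in>K. s k powr \<alpha> k) = 1" .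
  have "(\<Prod>k\<in>K. f k powr \<alpha> k) = (\<Prod>k\<in>K. (f k * s k) powr \<alpha> k)"
    by (simp add: powr_mult prod.distrib s_factor)
  also have "\<dots> \<le> (\<Prod>k\<in>K. F k powr \<alpha> k)"
    using f_nonneg fs_le_F \<alpha> by (intro prod_mono) (auto intro: powr_mono2 simp: s_def)
  also have "\<dots> \<le> (\<Sum>k\<in>K. \<alpha> k * F k)"
    using F_nonneg \<alpha> K by (intro weighted_geom_mean_le_arith_mean) auto
  also have "\<dots> = Fform m n (\<lambda>i j. \<Sum>k\<in>K. \<alpha> k * Gs k i j) x y"
    by (simp add: F_def Fform_weighted_sum)
  finally show "(\<Prod>k\<in>K. fmin m n (Gs k) (Rs k) (Cs k) powr \<alpha> k)
      \<le> Fform m n (\<lambda>i j. \<Sum>k\<in>K. \<alpha> k * Gs k i j) x y"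
    by (simp add: f_def)
qed

theorem lemma4p2:
  fixes m n p :: nat
    and Gs :: "nat \<Rightarrow> nat \<Rightarrow> nat \<Rightarrow> real"
    and Rs Cs :: "nat \<Rightarrow> nat \<Rightarrow> real"
    and \<alpha> :: "nat \<Rightarrow> real"
  assumes "m \<ge> 1" and "n \<ge> 1" and "p \<ge> 1"
    and Gpos: "\<forall>k<p. \<forall>i<m. \<forall>j<n. Gs k i j > 0"
    and Rpos: "\<forall>k<p. \<forall>i<m. Rs k i > 0"
    and Cpos: "\<forall>k<p. \<forall>j<n. Cs k j > 0"
    and sums: "\<forall>k<p. vabs m (Rs k) = vabs m (Rs 0) \<and> vabs n (Cs k) = vabs m (Rs 0)"
    and apos: "\<forall>k<p. \<alpha> k \<ge> 0"
    and asum: "(\<Sum>k<p. \<alpha> k) = 1"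
  shows "fmin m n (\<lambda>i j. \<Sum>k<p. \<alpha> k * Gs k i j) (\<lambda>i. \<Sum>k<p. \<alpha> k * Rs k i)
           (\<lambda>j. \<Sum>k<p. \<alpha> k * Cs k j)
         \<ge> (\<Prod>k<p. fmin m n (Gs k) (Rs k) (Cs k) powr \<alpha> k)"
proof -
  \<comment> \<open>only \<open>G\<^sub>k \<ge> 0\<close> and \<open>|R\<^sub>k| = |C\<^sub>k| > 0\<close> are needed; positivity of the \<open>C\<^sub>k\<close> is not\<close>
  define N where "N = vabs m (Rs 0)"
  have "0 < N"
    unfolding N_def vabs_def using Rpos \<open>m \<ge> 1\<close> \<open>p \<ge> 1\<close>
    by (intro sum_pos) (auto simp: lessThan_empty_iff)
  moreover have "\<forall>k\<in>{..<p}. \<forall>i<m. \<forall>j<n. 0 \<le> Gs k i j"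
    using Gpos by (simp add: less_imp_le)
  moreover have "\<forall>k\<in>{..<p}. vabs m (Rs k) = N" and "\<forall>k\<in>{..<p}. vabs n (Cs k) = N"
    unfolding N_def using sums by blast+
  ultimately show ?thesis
    using apos asum by (intro prod_fmin_powr_le_fmin_weighted_sum) auto
qed

end
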